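(* Let $D=\mathrm{diag}(d_1,\ldots,d_r)\in\mathcal{G}l_r(\mathbb{C})$ be an invertible diagonal matrix and let $\mu_1,\ldots,\mu_k$ be its distinct eigenvalues. Fix $N\in\mathcal{U}(D)$ and let $\mathcal{A}_N=\{B\in\mathcal{M}_r(\mathbb{C}): BE_i(N)=E_i(N)B,\ 1\le i\le k\}$, where $E_i(N)$ is the spectral projection of $N$ associated to the eigenvalue $\mu_i$. Then $T_N\Delta|_{\mathcal{A}_N}=I_{\mathcal{A}_N}$, i.e. $T_N\Delta(X)=X$ for every $X\in\mathcal{A}_N$.
   Context: $\mathcal{M}_r(\mathbb{C})$ is the algebra of complex $r\times r$ matrices (viewed as a real vector space), $\mathcal{G}l_r(\mathbb{C})$ the invertible ones, $\mathcal{U}(r)$ the unitary group. $\mathcal{U}(D)=\{UDU^*:U\in\mathcal{U}(r)\}$ is the unitary orbit of $D$. The Aluthge transform of $T=U|T|$ (polar decomposition) is $\Delta(T)=|T|^{1/2}U|T|^{1/2}$; $\Delta$ is $C^\infty$ on $\mathcal{G}l_r(\mathbb{C})$, and $T_N\Delta$ denotes its (real) derivative at $N$. Since $N$ is normal, $\mathcal{A}_N$ coincides with the commutant $\{B: NB=BN\}$. *)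

theory Defs
  imports "HOL-Analysis.Analysis"
begin

text \<open>Complex r x r matrices are modelled as complex^'n^'n with 'n a finite type, r = CARD('n).
 They form a real normed vector space, so the real (Frechet) derivative makes sense.\<close>

type_synonym 'n cmat = "complex^'n^'n"

definition adj :: "'n::finite cmat \<Rightarrow> 'n cmat" where
  "adj A = (\<chi> i j. cnj (A $ j $ i))"

definition diag :: "('n::finite \<Rightarrow> complex) \<Rightarrow> 'n cmat" where
  "diag d = (\<chi> i j. if i = j then d i else 0)"

definition unitary :: "'n::finite cmat \<Rightarrow> bool" where
  "unitary U \<longleftrightarrow> U ** adj U = mat 1 \<and> adj U ** U = mat 1"

definition unitary_orbit :: "'n::finite cmat \<Rightarrow> 'n cmat set" where
  "unitary_orbit D = {U ** D ** adj U | U. unitary U}"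

definition cinner :: "complex^'n::finite \<Rightarrow> complex^'n \<Rightarrow> complex" where
  "cinner x y = (\<Sum>i\<in>UNIV. cnj (x $ i) * y $ i)"

definition psd :: "'n::finite cmat \<Rightarrow> bool" where
  "psd P \<longleftrightarrow> adj P = P \<and> (\<forall>x. 0 \<le> Re (cinner x (P *v x)))"

definition msqrt :: "'n::finite cmat \<Rightarrow> 'n cmat" where
  "msqrt A = (THE P. psd P \<and> P ** P = A)"

definition minv :: "'n::finite cmat \<Rightarrow> 'n cmat" where
  "minv A = (SOME B. A ** B = mat 1 \<and> B ** A = mat 1)"

text \<open>Polar decomposition T = U |T| for invertible T: |T| = (T^* T)^(1/2), U = T |T|^(-1).\<close>
definition mabs :: "'n::finite cmat \<Rightarrow> 'n cmat" where
  "mabs T = msqrt (adj T ** T)"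

definition polar_unitary :: "'n::finite cmat \<Rightarrow> 'n cmat" where
  "polar_unitary T = T ** minv (mabs T)"

definition aluthge :: "'n::finite cmat \<Rightarrow> 'n cmat" where
  "aluthge T = msqrt (mabs T) ** polar_unitary T ** msqrt (mabs T)"

definition spectral_proj :: "'n::finite cmat \<Rightarrow> complex \<Rightarrow> 'n cmat" where
  "spectral_proj N \<mu> = (THE E. E ** E = E \<and> adj E = E \<and>
       range (\<lambda>x. E *v x) = {x. N *v x = \<mu> *s x})"

definition AN :: "('n::finite \<Rightarrow> complex) \<Rightarrow> 'n cmat \<Rightarrow> 'n cmat set" where
  "AN d N = {B. \<forall>\<mu>\<in>range d. B ** spectral_proj N \<mu> = spectral_proj N \<mu> ** B}"

end

theory Submission
  imports Defs
begin

text \<open>Near an invertible \<open>N\<close> the Aluthge transform is \<open>\<Delta>(T) = R(T) T M(T)^-1 R(T)\<close> with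
  \<open>M(T) = (T\<^sup>*T)^(1/2)\<close> and \<open>R(T) = M(T)^(1/2)\<close>. The positive square root is smooth at a positive
  definite \<open>S\<close>: it is the local inverse of \<open>X \<mapsto> X X\<close>, whose derivative \<open>H \<mapsto> S H + H S\<close> is injective
  (if \<open>S Z + Z Q = 0\<close> with \<open>S > 0\<close>, \<open>Q \<ge> 0\<close>, then pairing with \<open>Z\<close> gives a sum of nonnegative terms
  equal to zero), so the inverse function theorem applies, and the chain rule expresses \<open>T\<^sub>N\<Delta>\<close>
  through the solutions \<open>L, P\<close> of the Lyapunov equations \<open>M L + L M = N\<^sup>*H + H\<^sup>*N\<close> and
  \<open>R P + P R = L\<close>. If \<open>N = U diag(d) U\<^sup>*\<close> and \<open>X\<close> commutes with the spectral projections of \<open>N\<close>,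
  then \<open>X\<close>, \<open>X\<^sup>*\<close> and \<open>K = N\<^sup>*X + X\<^sup>*N\<close> commute with every function of \<open>N\<close>. Hence \<open>L = K M\<^sup>-\<^sup>1/2\<close> and
  \<open>P = K M\<^sup>-\<^sup>1 R\<^sup>-\<^sup>1/4\<close>, and \<open>T\<^sub>N\<Delta>(X) = X + (1/4 - 1/2 + 1/4) K N M\<^sup>-\<^sup>2 = X\<close>.\<close>

lemma adj_nth [simp]: "adj A $ i $ j = cnj (A $ j $ i)"
  by (simp add: adj_def)

lemma adj_adj [simp]: "adj (adj A) = A"
  by (simp add: vec_eq_iff)

lemma adj_mult: "adj (A ** B) = adj B ** adj A"
  by (simp add: vec_eq_iff matrix_matrix_mult_def mult.commute)

lemma bounded_linear_adj: "bounded_linear (adj :: 'n::finite cmat \<Rightarrow> 'n cmat)"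
  by (auto intro!: linearI simp: linear_conv_bounded_linear[symmetric] vec_eq_iff)

interpretation matrix_mult: bounded_bilinear "(**) :: 'n::finite cmat \<Rightarrow> 'n cmat \<Rightarrow> 'n cmat"
  unfolding bilinear_conv_bounded_bilinear[symmetric] bilinear_def
  by (auto intro!: linearI simp: vec_eq_iff matrix_matrix_mult_def sum.distrib ring_distribs scaleR_sum_right)

interpretation cinner: bounded_bilinear "cinner :: complex^'n::finite \<Rightarrow> complex^'n \<Rightarrow> complex"
  unfolding bilinear_conv_bounded_bilinear[symmetric] bilinear_def
  by (auto intro!: linearI simp: cinner_def sum.distrib ring_distribs scaleR_sum_right)

interpretation matrix_vector_mult: bounded_bilinear "(*v) :: 'n::finite cmat \<Rightarrow> complex^'n \<Rightarrow> complex^'n"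
  unfolding bilinear_conv_bounded_bilinear[symmetric] bilinear_def
  by (auto intro!: linearI simp: matrix_vector_mult_def vec_eq_iff sum.distrib ring_distribs scaleR_sum_right)

lemma cinner_adj: "cinner x (A *v y) = cinner (adj A *v x) y"
  unfolding cinner_def matrix_vector_mult_def
  by (simp add: sum_distrib_left sum_distrib_right mult_ac) (rule sum.swap)


lemma cinner_self: "cinner x x = of_real ((norm x)\<^sup>2)"
proof -
  have "(norm x)\<^sup>2 = (\<Sum>i\<in>UNIV. (cmod (x $ i))\<^sup>2)"
    unfolding norm_vec_def L2_set_def by (simp add: sum_nonneg)
  then show ?thesis
    unfolding cinner_def by (simp add: complex_norm_square mult.commute del: of_real_power)
qed

section \<open>Positive definite matrices and their square roots\<close>

definition pos_def_ge :: "real \<Rightarrow> 'n::finite cmat \<Rightarrow> bool" where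
  "pos_def_ge \<delta> M \<longleftrightarrow> adj M = M \<and> 0 < \<delta> \<and> (\<forall>x. \<delta> * (norm x)\<^sup>2 \<le> Re (cinner x (M *v x)))"

lemma pos_def_ge_imp_psd: "pos_def_ge \<delta> M \<Longrightarrow> psd M"
  unfolding pos_def_ge_def psd_def by (meson order_trans mult_nonneg_nonneg zero_le_power2 less_imp_le)

lemma sylvester_eq_zero:
  fixes S Q Z :: "'n::finite cmat"
  assumes S: "pos_def_ge \<delta> S" and Q: "psd Q" and eq: "S ** Z + Z ** Q = 0"
  shows "Z = 0"
proof -
  define col where "col j = (\<chi> i. Z $ i $ j)" for j
  define row where "row i = (\<chi> k. cnj (Z $ i $ k))" for i
  have col_sum: "(\<Sum>j\<in>UNIV. cinner (col j) (S *v col j)) = (\<Sum>j\<in>UNIV. \<Sum>i\<in>UNIV. cnj (Z$i$j) * (S ** Z)$i$j)"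
    unfolding col_def cinner_def matrix_vector_mult_def matrix_matrix_mult_def by simp
  have row_sum: "(\<Sum>i\<in>UNIV. cinner (row i) (Q *v row i)) = (\<Sum>j\<in>UNIV. \<Sum>i\<in>UNIV. cnj (Z$i$j) * (Z ** Q)$i$j)"
    unfolding row_def cinner_def matrix_vector_mult_def matrix_matrix_mult_def
    by (subst sum.swap) (simp add: sum_distrib_left sum_distrib_right mult_ac, subst sum.swap, rule refl)
  have "(S ** Z)$i$j + (Z ** Q)$i$j = 0" for i j
    using eq by (simp add: vec_eq_iff)
  then have "(\<Sum>j\<in>UNIV. cinner (col j) (S *v col j)) + (\<Sum>i\<in>UNIV. cinner (row i) (Q *v row i)) = 0"
    unfolding col_sum row_sum by (simp add: sum.distrib[symmetric] ring_distribs[symmetric])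
  then have "(\<Sum>j\<in>UNIV. Re (cinner (col j) (S *v col j))) + (\<Sum>i\<in>UNIV. Re (cinner (row i) (Q *v row i))) = 0"
    by (metis Re_sum plus_complex.sel(1) zero_complex.sel(1))
  moreover have "0 \<le> (\<Sum>i\<in>UNIV. Re (cinner (row i) (Q *v row i)))"
    using Q unfolding psd_def by (simp add: sum_nonneg)
  moreover have "(\<Sum>j\<in>UNIV. \<delta> * (norm (col j))\<^sup>2) \<le> (\<Sum>j\<in>UNIV. Re (cinner (col j) (S *v col j)))"
    using S unfolding pos_def_ge_def by (simp add: sum_mono)
  moreover have "0 < \<delta>"
    using S unfolding pos_def_ge_def by blast
  moreover from this have "0 \<le> (\<Sum>j\<in>UNIV. \<delta> * (norm (col j))\<^sup>2)"
    by (simp add: sum_nonneg)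
  ultimately have "(\<Sum>j\<in>UNIV. \<delta> * (norm (col j))\<^sup>2) = 0"
    by linarith
  then have "\<delta> * (norm (col j))\<^sup>2 = 0" for j
    using \<open>0 < \<delta>\<close> by (simp add: sum_nonneg_eq_0_iff)
  then show "Z = 0"
    using \<open>0 < \<delta>\<close> by (simp add: col_def vec_eq_iff)
qed

lemma msqrt_eqI:
  assumes S: "pos_def_ge \<delta> S" and "S ** S = A"
  shows "msqrt A = S"
  unfolding msqrt_def
proof (rule the_equality)
  show "psd S \<and> S ** S = A"
    using assms pos_def_ge_imp_psd by blast
  fix P assume P: "psd P \<and> P ** P = A"
  then have "S ** (S - P) + (S - P) ** P = 0"
    using assms(2) by (simp add: matrix_mult.diff_left matrix_mult.diff_right)
  then have "S - P = 0"
    using sylvester_eq_zero[OF S] P by blast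
  then show "P = S"
    by simp
qed

lemma eventually_pos_def_ge_half:
  fixes M :: "'n::finite cmat"
  assumes M: "pos_def_ge \<delta> M"
  shows "\<forall>\<^sub>F P in nhds M. adj P = P \<longrightarrow> pos_def_ge (\<delta>/2) P"
proof -
  obtain K1 where K1: "K1 > 0" "\<And>x y::complex^'n. norm (cinner x y) \<le> norm x * norm y * K1"
    using cinner.pos_bounded by blast
  obtain K2 where K2: "K2 > 0" "\<And>(A::'n cmat) x. norm (A *v x) \<le> norm A * norm x * K2"
    using matrix_vector_mult.pos_bounded by blast
  have \<delta>: "\<delta> > 0" and lower: "\<And>x. \<delta> * (norm x)\<^sup>2 \<le> Re (cinner x (M *v x))"
    using M unfolding pos_def_ge_def by auto
  have close: "pos_def_ge (\<delta>/2) P" if "adj P = P" "dist P M < \<delta> / (2 * K1 * K2)" for P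
    unfolding pos_def_ge_def
  proof (intro conjI allI that(1))
    fix x :: "complex^'n"
    have "norm (cinner x ((P - M) *v x)) \<le> norm x * norm ((P - M) *v x) * K1"
      by (rule K1(2))
    also have "\<dots> \<le> norm x * (norm (P - M) * norm x * K2) * K1"
      using K1 K2 by (intro mult_right_mono mult_left_mono) auto
    also have "\<dots> = (norm (P - M) * K1 * K2) * (norm x)\<^sup>2"
      by (simp add: power2_eq_square mult_ac)
    also have "\<dots> \<le> \<delta>/2 * (norm x)\<^sup>2"
      using that(2) K1 K2 by (intro mult_right_mono) (auto simp: dist_norm field_simps)
    finally have "- (\<delta>/2 * (norm x)\<^sup>2) \<le> Re (cinner x ((P - M) *v x))"
      using abs_Re_le_cmod[of "cinner x ((P - M) *v x)"] by linarith
    then show "\<delta>/2 * (norm x)\<^sup>2 \<le> Re (cinner x (P *v x))"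
      using lower[of x] by (simp add: matrix_vector_mult.diff_left cinner.diff_right)
  qed (use \<delta> in simp)
  moreover have "\<delta> / (2 * K1 * K2) > 0"
    using \<delta> K1 K2 by simp
  ultimately show ?thesis
    unfolding eventually_nhds_metric by blast
qed

section \<open>Differentiability of inversion\<close>

lemma minv_eqI:
  fixes A B :: "'n::finite cmat"
  assumes "A ** B = mat 1"
  shows "minv A = B"
proof -
  have BA: "B ** A = mat 1"
    using assms by (rule matrix_left_right_inverse1)
  have "A ** minv A = mat 1 \<and> minv A ** A = mat 1"
    unfolding minv_def by (rule someI[of _ B]) (use assms BA in blast)
  then have "minv A = minv A ** (A ** B)"
    using assms by simp
  also have "\<dots> = B"
    by (simp add: matrix_mul_assoc \<open>A ** minv A = mat 1 \<and> minv A ** A = mat 1\<close>)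
  finally show ?thesis .
qed

lemma minv_right_inverse:
  fixes A :: "'n::finite cmat"
  assumes "det A \<noteq> 0"
  shows "A ** minv A = mat 1"
  using assms invertible_det_nz invertible_right_inverse minv_eqI by metis

lemma eventually_det_nonzero:
  fixes A :: "'n::finite cmat"
  assumes "det A \<noteq> 0"
  shows "\<forall>\<^sub>F B in at A. det B \<noteq> 0"
proof -
  have "isCont det A"
    unfolding det_def by (intro continuous_intros)
  then show ?thesis
    using assms unfolding isCont_def by (rule tendsto_imp_eventually_ne)
qed

lemma minv_diff:
  fixes A Ai B :: "'n::finite cmat"
  assumes "A ** Ai = mat 1" "det B \<noteq> 0"
  shows "minv B - Ai = - (minv B ** (B - A) ** Ai)"
proof -
  have "minv B ** B = mat 1"
    using minv_right_inverse[OF assms(2)] by (rule matrix_left_right_inverse1)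
  then have "minv B ** (B - A) ** Ai = Ai - minv B"
    using assms(1) by (simp add: matrix_mult.diff_left matrix_mult.diff_right flip: matrix_mul_assoc)
  then show ?thesis
    by simp
qed

lemma norm_matrix_mult3_le:
  "\<exists>K>0. \<forall>(X::'n::finite cmat) (Y::'n cmat) (Z::'n cmat). norm (X ** Y ** Z) \<le> norm X * norm Y * norm Z * (K * K)"
proof -
  obtain K where K: "K > 0" "\<And>(X::'n cmat) (Y::'n cmat). norm (X ** Y) \<le> norm X * norm Y * K"
    using matrix_mult.pos_bounded by blast
  have "norm (X ** Y ** Z) \<le> norm X * norm Y * norm Z * (K * K)" for X Y Z :: "'n cmat"
  proof -
    have "norm (X ** Y ** Z) \<le> norm (X ** Y) * norm Z * K"
      by (rule K(2))
    also have "\<dots> \<le> (norm X * norm Y * K) * norm Z * K"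
      using K by (intro mult_right_mono) auto
    finally show ?thesis
      by (simp add: mult_ac)
  qed
  then show ?thesis
    using K(1) by blast
qed

lemma tendsto_minv:
  fixes A Ai :: "'n::finite cmat"
  assumes inv: "A ** Ai = mat 1"
  shows "(minv \<longlongrightarrow> Ai) (at A)"
proof -
  obtain K where K: "K > 0" "\<And>(X::'n cmat) (Y::'n cmat) (Z::'n cmat). norm (X ** Y ** Z) \<le> norm X * norm Y * norm Z * (K * K)"
    using norm_matrix_mult3_le by blast
  define c where "c = K * K * norm Ai"
  have c: "c \<ge> 0"
    using K by (simp add: c_def)
  have "det A \<noteq> 0"
    using inv invertible_det_nz invertible_right_inverse by blast
  then have invertible: "\<forall>\<^sub>F y in at A. det y \<noteq> 0"
    by (rule eventually_det_nonzero)
  have "((\<lambda>y. norm (y - A) * c) \<longlongrightarrow> 0) (at A)"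
    by (auto intro!: tendsto_eq_intros)
  then have small: "\<forall>\<^sub>F y in at A. norm (y - A) * c < 1/2"
    by (rule order_tendstoD(2)) simp
  have "\<forall>\<^sub>F y in at A. norm (minv y - Ai) \<le> 2 * norm Ai * c * norm (y - A)"
    using invertible small
  proof eventually_elim
    case (elim y)
    define e where "e = norm (minv y - Ai)"
    define t where "t = norm (y - A) * c"
    have "e = norm (minv y ** (y - A) ** Ai)"
      unfolding e_def minv_diff[OF inv elim(1)] by (rule norm_minus_cancel)
    also have "\<dots> \<le> norm (minv y) * t"
      using K(2)[of "minv y" "y - A" Ai] by (simp add: t_def c_def mult_ac)
    also have "\<dots> \<le> (norm Ai + e) * t"
      using c norm_triangle_sub[of "minv y" Ai] by (intro mult_right_mono) (auto simp: e_def t_def)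
    finally have "e \<le> norm Ai * t + e * t"
      by (simp add: algebra_simps)
    moreover have "e * t \<le> e * (1/2)"
      using elim(2) by (intro mult_left_mono) (simp_all add: e_def t_def)
    ultimately have "e \<le> 2 * (norm Ai * t)"
      by linarith
    then show ?case
      by (simp add: e_def t_def mult_ac)
  qed
  moreover have "((\<lambda>y. 2 * norm Ai * c * norm (y - A)) \<longlongrightarrow> 0) (at A)"
    by (auto intro!: tendsto_eq_intros)
  ultimately have "((\<lambda>y. minv y - Ai) \<longlongrightarrow> 0) (at A)"
    by (rule Lim_null_comparison)
  then show ?thesis
    by (rule LIM_zero_cancel)
qed

lemma minv_has_derivative:
  fixes A Ai :: "'n::finite cmat"
  assumes inv: "A ** Ai = mat 1"
  shows "(minv has_derivative (\<lambda>H. - (Ai ** H ** Ai))) (at A)"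
  unfolding has_derivative_iff_norm
proof
  show "bounded_linear (\<lambda>H. - (Ai ** H ** Ai))"
    by (intro bounded_linear_minus matrix_mult.bounded_linear_left matrix_mult.bounded_linear_right
        bounded_linear_compose[OF matrix_mult.bounded_linear_left matrix_mult.bounded_linear_right])
  obtain K where K: "K > 0" "\<And>(X::'n cmat) (Y::'n cmat) (Z::'n cmat). norm (X ** Y ** Z) \<le> norm X * norm Y * norm Z * (K * K)"
    using norm_matrix_mult3_le by blast
  have "det A \<noteq> 0"
    using inv invertible_det_nz invertible_right_inverse by blast
  then have "\<forall>\<^sub>F y in at A. det y \<noteq> 0"
    by (rule eventually_det_nonzero)
  then have "\<forall>\<^sub>F y in at A. norm (norm (minv y - minv A - - (Ai ** (y - A) ** Ai)) / norm (y - A))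
      \<le> norm (minv y - Ai) * (norm Ai * (K * K))"
  proof eventually_elim
    case (elim y)
    have "minv y - minv A - - (Ai ** (y - A) ** Ai) = (minv y - Ai) + Ai ** (y - A) ** Ai"
      by (simp add: minv_eqI[OF inv])
    also have "\<dots> = - ((minv y - Ai) ** (y - A) ** Ai)"
      unfolding matrix_mult.diff_left unfolding minv_diff[OF inv elim] by simp
    finally have "minv y - minv A - - (Ai ** (y - A) ** Ai) = - ((minv y - Ai) ** (y - A) ** Ai)" .
    then have "norm (minv y - minv A - - (Ai ** (y - A) ** Ai))
        \<le> norm (y - A) * (norm (minv y - Ai) * (norm Ai * (K * K)))"
      using K(2)[of "minv y - Ai" "y - A" Ai] by (simp add: mult_ac)
    then show ?case
      by (cases "y = A") (simp_all add: divide_le_eq mult.commute)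
  qed
  moreover have "((\<lambda>y. norm (minv y - Ai) * (norm Ai * (K * K))) \<longlongrightarrow> 0) (at A)"
    using LIM_zero[OF tendsto_minv[OF inv]] by (intro tendsto_mult_left_zero tendsto_norm_zero)
  ultimately show "((\<lambda>y. norm (minv y - minv A - - (Ai ** (y - A) ** Ai)) / norm (y - A)) \<longlongrightarrow> 0) (at A)"
    by (rule Lim_null_comparison)
qed

section \<open>Differentiability of the square root and of the Aluthge transform\<close>

text \<open>\<open>lyapunov S\<close> is the derivative of \<open>X \<mapsto> X X\<close> at \<open>S\<close>.\<close>

definition lyapunov :: "'n::finite cmat \<Rightarrow> 'n cmat \<Rightarrow>\<^sub>L 'n cmat" where
  "lyapunov S = Blinfun (\<lambda>H. S ** H + H ** S)"

definition lyapunov_solve :: "'n::finite cmat \<Rightarrow> 'n cmat \<Rightarrow> 'n cmat" where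
  "lyapunov_solve S = inv (\<lambda>H. S ** H + H ** S)"

lemma lyapunov_apply: "blinfun_apply (lyapunov S) = (\<lambda>H. S ** H + H ** S)"
  unfolding lyapunov_def
  by (intro bounded_linear_Blinfun_apply bounded_linear_add
      matrix_mult.bounded_linear_left matrix_mult.bounded_linear_right)

lemma inj_lyapunov:
  assumes "pos_def_ge \<delta> S"
  shows "inj (\<lambda>H. S ** H + H ** S)"
proof -
  have lin: "linear (\<lambda>H. S ** H + H ** S)"
    using lyapunov_apply[of S] blinfun.bounded_linear_right bounded_linear.linear by metis
  show ?thesis
    unfolding linear_injective_0[OF lin] using sylvester_eq_zero[OF assms pos_def_ge_imp_psd[OF assms]] by blast
qed

lemma lyapunov_solve_eqI:
  assumes "pos_def_ge \<delta> S" "S ** L + L ** S = K"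
  shows "lyapunov_solve S K = L"
  unfolding lyapunov_solve_def using inv_f_f[OF inj_lyapunov[OF assms(1)], of L] assms(2) by simp

lemma lyapunov_solve_commuting:
  assumes S: "pos_def_ge \<delta> S" and SK: "S ** K = K ** S" and Si: "S ** Si = mat 1"
  shows "lyapunov_solve S K = (1/2) *\<^sub>R (K ** Si)"
proof (rule lyapunov_solve_eqI[OF S])
  have "S ** (K ** Si) = K ** (S ** Si)"
    by (metis SK matrix_mul_assoc)
  moreover have "(K ** Si) ** S = K"
    using matrix_left_right_inverse1[OF Si] by (simp flip: matrix_mul_assoc)
  ultimately show "S ** ((1/2) *\<^sub>R (K ** Si)) + ((1/2) *\<^sub>R (K ** Si)) ** S = K"
    using Si by (simp add: matrix_mult.scaleR_left matrix_mult.scaleR_right flip: scaleR_add_left)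
qed

lemma square_local_inverse:
  fixes M :: "'n::finite cmat"
  assumes M: "pos_def_ge \<delta> M"
  obtains U V g where "open U" "M \<in> U" "open V" "M ** M \<in> V"
    "\<And>X. X \<in> U \<Longrightarrow> g (X ** X) = X" "\<And>z. z \<in> V \<Longrightarrow> g z ** g z = z"
    "isCont g (M ** M)" "(g has_derivative lyapunov_solve M) (at (M ** M))"
proof -
  have "linear (blinfun_apply (lyapunov M))"
    by (rule bounded_linear.linear[OF blinfun.bounded_linear_right])
  moreover have "inj (blinfun_apply (lyapunov M))"
    using inj_lyapunov[OF M] by (simp add: lyapunov_apply)
  ultimately obtain h where "linear h" "h \<circ> blinfun_apply (lyapunov M) = id"
    using linear_injective_left_inverse by blast
  then have left_inverse: "Blinfun h o\<^sub>L lyapunov M = id_blinfun"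
    by (intro blinfun_eqI) (simp add: bounded_linear_Blinfun_apply linear_conv_bounded_linear pointfree_idE)
  have "linear (lyapunov :: 'n cmat \<Rightarrow> _)"
  proof (rule linearI)
    show "lyapunov (S + T) = lyapunov S + lyapunov T" for S T :: "'n cmat"
      by (rule blinfun_eqI) (simp add: lyapunov_apply blinfun.add_left matrix_mult.add_left matrix_mult.add_right)
    show "lyapunov (r *\<^sub>R S) = r *\<^sub>R lyapunov S" for r and S :: "'n cmat"
      by (rule blinfun_eqI)
        (simp add: lyapunov_apply blinfun.scaleR_left matrix_mult.scaleR_left matrix_mult.scaleR_right scaleR_add_right)
  qed
  then have continuous: "continuous_on UNIV (lyapunov :: 'n cmat \<Rightarrow> _)"
    by (simp add: linear_continuous_on linear_conv_bounded_linear)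
  have square_deriv: "((\<lambda>X. X ** X) has_derivative blinfun_apply (lyapunov X)) (at X)" for X :: "'n cmat"
    using matrix_mult.FDERIV[OF has_derivative_ident has_derivative_ident, of X UNIV]
    by (simp add: lyapunov_apply add.commute)
  obtain U V g g' where U: "open U" "M \<in> U" and V: "open V" "M ** M \<in> V"
    and hom: "homeomorphism U V (\<lambda>X. X ** X) g"
    and g': "\<And>y. y \<in> V \<Longrightarrow> (g has_derivative g' y) (at y)"
      "\<And>y. y \<in> V \<Longrightarrow> g' y = inv (blinfun_apply (lyapunov (g y)))"
    by (rule inverse_function_theorem[OF open_UNIV square_deriv continuous UNIV_I left_inverse]) (rule that)
  have g_square: "\<And>X. X \<in> U \<Longrightarrow> g (X ** X) = X" and "\<And>z. z \<in> V \<Longrightarrow> g z ** g z = z"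
    and "continuous_on V g"
    using hom unfolding homeomorphism_def by auto
  moreover have "isCont g (M ** M)"
    using \<open>continuous_on V g\<close> V continuous_on_eq_continuous_at by blast
  moreover have "(g has_derivative lyapunov_solve M) (at (M ** M))"
    using g'[OF V(2)] g_square[OF U(2)] by (simp add: lyapunov_apply lyapunov_solve_def)
  ultimately show ?thesis
    using that U V by blast
qed

lemma msqrt_local_inverse:
  fixes M :: "'n::finite cmat"
  assumes M: "pos_def_ge \<delta> M"
  obtains g where "(g has_derivative lyapunov_solve M) (at (M ** M))"
    "\<forall>\<^sub>F z in nhds (M ** M). adj z = z \<longrightarrow> msqrt z = g z \<and> pos_def_ge (\<delta>/2) (g z)"
proof -
  obtain U V g where U: "open U" "M \<in> U" and V: "open V" "M ** M \<in> V"
    and g_square: "\<And>X. X \<in> U \<Longrightarrow> g (X ** X) = X" and square_g: "\<And>z. z \<in> V \<Longrightarrow> g z ** g z = z"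
    and "isCont g (M ** M)" and "(g has_derivative lyapunov_solve M) (at (M ** M))"
    using square_local_inverse[OF M] by blast
  then have "(g \<longlongrightarrow> g (M ** M)) (nhds (M ** M))"
    unfolding isCont_def tendsto_at_iff_tendsto_nhds by blast
  then have g_lim: "filterlim g (nhds M) (nhds (M ** M))"
    by (simp only: g_square[OF U(2)])
  have "isCont adj M"
    by (rule linear_continuous_at[OF bounded_linear_adj])
  then have "filterlim adj (nhds M) (nhds M)"
    using M by (simp add: isCont_def tendsto_at_iff_tendsto_nhds pos_def_ge_def)
  then have "\<forall>\<^sub>F P in nhds M. adj P \<in> U"
    by (rule eventually_compose_filterlim[OF eventually_nhds_in_open[OF U]])
  then have "\<forall>\<^sub>F P in nhds M. adj P \<in> U \<and> (adj P = P \<longrightarrow> pos_def_ge (\<delta>/2) P)"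
    using eventually_pos_def_ge_half[OF M] by eventually_elim blast
  then have "\<forall>\<^sub>F z in nhds (M ** M). adj (g z) \<in> U \<and> (adj (g z) = g z \<longrightarrow> pos_def_ge (\<delta>/2) (g z))"
    using g_lim by (rule eventually_compose_filterlim)
  then have "\<forall>\<^sub>F z in nhds (M ** M). adj z = z \<longrightarrow> msqrt z = g z \<and> pos_def_ge (\<delta>/2) (g z)"
    using eventually_nhds_in_open[OF V]
  proof eventually_elim
    case (elim z)
    show ?case
    proof
      assume "adj z = z"
      txt \<open>Then \<open>adj (g z)\<close> is another square root of \<open>z\<close> near \<open>M\<close>, so the local inverse returns it.\<close>
      then have "adj (g z) ** adj (g z) = z"
        using square_g[OF elim(2)] adj_mult by metis
      then have "adj (g z) = g z"
        using g_square[of "adj (g z)"] elim(1) by simp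
      then show "msqrt z = g z \<and> pos_def_ge (\<delta>/2) (g z)"
        using msqrt_eqI square_g[OF elim(2)] elim(1) by blast
    qed
  qed
  then show ?thesis
    using that \<open>(g has_derivative lyapunov_solve M) (at (M ** M))\<close> by blast
qed

lemma has_derivative_msqrt_compose:
  fixes f :: "'a::real_normed_vector \<Rightarrow> 'n::finite cmat"
  assumes M: "pos_def_ge \<delta> M" and f: "(f has_derivative f') (at x)" and fx: "f x = M ** M"
    and hermitian: "\<forall>\<^sub>F y in nhds x. adj (f y) = f y"
  shows "((\<lambda>y. msqrt (f y)) has_derivative (\<lambda>h. lyapunov_solve M (f' h))) (at x)"
    and "\<forall>\<^sub>F y in nhds x. pos_def_ge (\<delta>/2) (msqrt (f y))"
proof -
  obtain g where g: "(g has_derivative lyapunov_solve M) (at (M ** M))"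
    "\<forall>\<^sub>F z in nhds (M ** M). adj z = z \<longrightarrow> msqrt z = g z \<and> pos_def_ge (\<delta>/2) (g z)"
    by (rule msqrt_local_inverse[OF M])
  have "isCont f x"
    by (rule has_derivative_continuous[OF f])
  then have "(f \<longlongrightarrow> f x) (nhds x)"
    unfolding isCont_def tendsto_at_iff_tendsto_nhds .
  then have "filterlim f (nhds (M ** M)) (nhds x)"
    by (simp only: fx)
  then have "\<forall>\<^sub>F y in nhds x. adj (f y) = f y \<longrightarrow> msqrt (f y) = g (f y) \<and> pos_def_ge (\<delta>/2) (g (f y))"
    by (rule eventually_compose_filterlim[OF g(2)])
  then have near: "\<forall>\<^sub>F y in nhds x. msqrt (f y) = g (f y) \<and> pos_def_ge (\<delta>/2) (g (f y))"
    using hermitian by eventually_elim blast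
  then show "\<forall>\<^sub>F y in nhds x. pos_def_ge (\<delta>/2) (msqrt (f y))"
    by (rule eventually_mono) simp
  have "((\<lambda>y. g (f y)) has_derivative (\<lambda>h. lyapunov_solve M (f' h))) (at x)"
    using has_derivative_compose[OF f] g(1) fx by simp
  moreover have "\<forall>\<^sub>F y in at x. g (f y) = msqrt (f y)"
    using near unfolding eventually_at_filter by (rule eventually_mono) simp
  moreover have "g (f x) = msqrt (f x)"
    using eventually_nhds_x_imp_x[OF near] by simp
  ultimately show "((\<lambda>y. msqrt (f y)) has_derivative (\<lambda>h. lyapunov_solve M (f' h))) (at x)"
    by (rule has_derivative_transform_eventually) simp
qed

lemma aluthge_has_derivative:
  fixes N M R Mi :: "'n::finite cmat"
  assumes M: "pos_def_ge \<delta> M" "M ** M = adj N ** N"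
    and R: "pos_def_ge \<epsilon> R" "R ** R = M"
    and Mi: "M ** Mi = mat 1"
  shows "(aluthge has_derivative (\<lambda>H.
           let L = lyapunov_solve M (adj N ** H + adj H ** N); P = lyapunov_solve R L
           in P ** (N ** Mi) ** R + R ** (H ** Mi - N ** (Mi ** L ** Mi)) ** R + R ** (N ** Mi) ** P)) (at N)"
proof -
  define L where "L H = lyapunov_solve M (adj N ** H + adj H ** N)" for H
  define P where "P H = lyapunov_solve R (L H)" for H
  have mabs_N: "mabs N = M"
    unfolding mabs_def using msqrt_eqI[OF M] by simp
  have "((\<lambda>T. adj T ** T) has_derivative (\<lambda>H. adj N ** H + adj H ** N)) (at N)"
    by (rule matrix_mult.FDERIV[OF bounded_linear_imp_has_derivative[OF bounded_linear_adj] has_derivative_ident])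
  moreover have "\<forall>\<^sub>F T in nhds N. adj (adj T ** T) = adj T ** T"
    by (simp add: adj_mult)
  ultimately have mabs_deriv: "(mabs has_derivative L) (at N)"
    and mabs_pos: "\<forall>\<^sub>F T in nhds N. pos_def_ge (\<delta>/2) (mabs T)"
    using has_derivative_msqrt_compose[of \<delta> M "\<lambda>T. adj T ** T", OF M(1) _ M(2)[symmetric]]
    unfolding mabs_def[abs_def] L_def by blast+
  have "\<forall>\<^sub>F T in nhds N. adj (mabs T) = mabs T"
    using mabs_pos by (rule eventually_mono) (simp add: pos_def_ge_def)
  then have root_deriv: "((\<lambda>T. msqrt (mabs T)) has_derivative P) (at N)"
    using has_derivative_msqrt_compose(1)[OF R(1) mabs_deriv] R(2) mabs_N unfolding P_def by simp
  have "((\<lambda>T. minv (mabs T)) has_derivative (\<lambda>H. - (Mi ** L H ** Mi))) (at N)"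
    using has_derivative_compose[OF mabs_deriv] minv_has_derivative[OF Mi] mabs_N by simp
  then have "(polar_unitary has_derivative (\<lambda>H. N ** - (Mi ** L H ** Mi) + H ** Mi)) (at N)"
    using matrix_mult.FDERIV[OF has_derivative_ident] minv_eqI[OF Mi] mabs_N
    unfolding polar_unitary_def[abs_def] by auto
  then have "(aluthge has_derivative (\<lambda>H. R ** (N ** Mi) ** P H
      + (R ** (N ** - (Mi ** L H ** Mi) + H ** Mi) + P H ** (N ** Mi)) ** R)) (at N)"
    using matrix_mult.FDERIV[OF matrix_mult.FDERIV[OF root_deriv] root_deriv] msqrt_eqI[OF R] mabs_N
      minv_eqI[OF Mi]
    unfolding aluthge_def[abs_def] polar_unitary_def by auto
  then show ?thesis
    by (rule has_derivative_eq_rhs)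
      (simp add: fun_eq_iff L_def P_def Let_def matrix_mult.add_left matrix_mult.add_right
        matrix_mult.minus_right matrix_mult.diff_left)
qed

section \<open>Functions of a normal matrix\<close>

lemma mat_mult_commute: "mat c ** A = A ** (mat c :: 'n::finite cmat)"
  by (simp add: vec_eq_iff matrix_matrix_mult_def mat_def mult.commute
      if_distrib[of "\<lambda>a. a * b" for b] if_distrib[of "\<lambda>a. b * a" for b] sum.delta sum.delta' cong: if_cong)

lemma mat_mult_vec: "mat c *v x = c *s (x :: complex^'n::finite)"
  by (simp add: vec_eq_iff matrix_vector_mult_def mat_def if_distrib[of "\<lambda>a. a * b" for b] sum.delta cong: if_cong)

lemma diag_mult: "diag \<phi> ** diag \<psi> = diag (\<lambda>j. \<phi> j * \<psi> j)"
  by (simp add: vec_eq_iff matrix_matrix_mult_def diag_def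
      if_distrib[of "\<lambda>a. a * b" for b] if_distrib[of "\<lambda>a. b * a" for b] sum.delta sum.delta' cong: if_cong)

lemma diag_mult_vec: "(diag \<phi> *v y) $ j = \<phi> j * y $ j"
  by (simp add: matrix_vector_mult_def diag_def if_distrib[of "\<lambda>a. a * b" for b] sum.delta cong: if_cong)

lemma adj_diag: "adj (diag \<phi>) = diag (\<lambda>j. cnj (\<phi> j))"
  by (simp add: vec_eq_iff diag_def)

text \<open>\<open>fun_calc U d h\<close> is \<open>h(N)\<close> for the normal matrix \<open>N = U diag(d) U\<^sup>*\<close>.\<close>

definition fun_calc :: "'n::finite cmat \<Rightarrow> ('n \<Rightarrow> complex) \<Rightarrow> (complex \<Rightarrow> complex) \<Rightarrow> 'n cmat" where
  "fun_calc U d h = U ** diag (\<lambda>j. h (d j)) ** adj U"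

lemma fun_calc_cong: "(\<And>j. f (d j) = g (d j)) \<Longrightarrow> fun_calc U d f = fun_calc U d g"
  unfolding fun_calc_def by presburger

lemma adj_fun_calc: "adj (fun_calc U d f) = fun_calc U d (\<lambda>z. cnj (f z))"
  by (simp add: fun_calc_def adj_mult adj_diag matrix_mul_assoc)

lemma fun_calc_diff: "fun_calc U d (\<lambda>z. f z - g z) = fun_calc U d f - fun_calc U d g"
proof -
  have "diag (\<lambda>j. f (d j) - g (d j)) = diag (\<lambda>j. f (d j)) - diag (\<lambda>j. g (d j))"
    by (simp add: vec_eq_iff diag_def)
  then show ?thesis
    by (simp add: fun_calc_def matrix_mult.diff_left matrix_mult.diff_right)
qed

lemma fun_calc_sum: "fun_calc U d (\<lambda>z. \<Sum>\<mu>\<in>S. f \<mu> z) = (\<Sum>\<mu>\<in>S. fun_calc U d (f \<mu>))"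
proof -
  have "diag (\<lambda>j. \<Sum>\<mu>\<in>S. f \<mu> (d j)) = (\<Sum>\<mu>\<in>S. diag (\<lambda>j. f \<mu> (d j)))"
    by (simp add: vec_eq_iff diag_def sum.If_cases)
  then show ?thesis
    by (simp add: fun_calc_def matrix_mult.sum_left matrix_mult.sum_right)
qed

lemma orthogonal_projection_eqI:
  fixes E F :: "'n::finite cmat"
  assumes "E ** E = E" "adj E = E" "F ** F = F" "adj F = F"
    and "range (\<lambda>x. E *v x) = range (\<lambda>x. F *v x)"
  shows "E = F"
proof -
  have "F ** E = E" "E ** F = F"
    using assms by (metis matrix_eq matrix_vector_mul_assoc rangeE rangeI)+
  then have "E = adj (F ** E)"
    using assms(2) by simp
  also have "\<dots> = E ** F"
    using assms(2,4) by (simp add: adj_mult)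
  finally show ?thesis
    using \<open>E ** F = F\<close> by simp
qed

context
  fixes U :: "'n::finite cmat"
  assumes U: "unitary U"
begin

lemma fun_calc_mult: "fun_calc U d f ** fun_calc U d g = fun_calc U d (\<lambda>z. f z * g z)"
proof -
  have "fun_calc U d f ** fun_calc U d g
      = U ** (diag (\<lambda>j. f (d j)) ** (adj U ** U) ** diag (\<lambda>j. g (d j))) ** adj U"
    by (simp add: fun_calc_def matrix_mul_assoc)
  also have "\<dots> = fun_calc U d (\<lambda>z. f z * g z)"
    using U by (simp add: unitary_def diag_mult fun_calc_def)
  finally show ?thesis .
qed

lemma fun_calc_mult_assoc:
  "fun_calc U d a ** (fun_calc U d b ** Y) = fun_calc U d (\<lambda>z. a z * b z) ** Y"
  by (metis fun_calc_mult matrix_mul_assoc)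

lemma fun_calc_const: "fun_calc U d (\<lambda>_. c) = mat c"
proof -
  have "fun_calc U d (\<lambda>_. c) = U ** mat c ** adj U"
    by (simp add: fun_calc_def vec_eq_iff diag_def mat_def)
  also have "\<dots> = mat c ** (U ** adj U)"
    by (simp add: mat_mult_commute matrix_mul_assoc)
  also have "\<dots> = mat c"
    using U by (simp add: unitary_def)
  finally show ?thesis .
qed

lemma norm_adj_unitary_mult: "norm (adj U *v x) = norm x"
proof -
  have "cinner (adj U *v x) (adj U *v x) = cinner x x"
    using U by (simp add: cinner_adj matrix_vector_mul_assoc unitary_def)
  then have "(norm (adj U *v x))\<^sup>2 = (norm x)\<^sup>2"
    by (simp add: cinner_self del: of_real_power)
  then show ?thesis
    by (simp add: power2_eq_iff_nonneg)
qed

lemma pos_def_ge_fun_calc: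
  assumes "0 < \<delta>" "\<And>j. \<delta> \<le> s (d j)"
  shows "pos_def_ge \<delta> (fun_calc U d (\<lambda>z. of_real (s z)))"
  unfolding pos_def_ge_def
proof (intro conjI allI assms(1))
  show "adj (fun_calc U d (\<lambda>z. of_real (s z))) = fun_calc U d (\<lambda>z. of_real (s z))"
    by (simp add: adj_fun_calc)
  fix x
  define y where "y = adj U *v x"
  have "fun_calc U d (\<lambda>z. of_real (s z)) *v x = U *v (diag (\<lambda>j. of_real (s (d j))) *v y)"
    by (simp add: fun_calc_def y_def matrix_vector_mul_assoc matrix_mul_assoc)
  then have "cinner x (fun_calc U d (\<lambda>z. of_real (s z)) *v x) = cinner y (diag (\<lambda>j. of_real (s (d j))) *v y)"
    unfolding y_def by (simp only: cinner_adj[of x U])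
  also have "\<dots> = (\<Sum>j\<in>UNIV. of_real (s (d j) * (cmod (y $ j))\<^sup>2))"
    by (simp add: cinner_def diag_mult_vec complex_norm_square mult_ac del: of_real_power)
  finally have Re_eq: "Re (cinner x (fun_calc U d (\<lambda>z. of_real (s z)) *v x))
      = (\<Sum>j\<in>UNIV. s (d j) * (cmod (y $ j))\<^sup>2)"
    by (simp add: Re_sum)
  have "(norm x)\<^sup>2 = (norm y)\<^sup>2"
    by (simp add: y_def norm_adj_unitary_mult)
  then have "\<delta> * (norm x)\<^sup>2 = (\<Sum>j\<in>UNIV. \<delta> * (cmod (y $ j))\<^sup>2)"
    by (simp add: norm_vec_def L2_set_def sum_nonneg sum_distrib_left)
  moreover have "(\<Sum>j\<in>UNIV. \<delta> * (cmod (y $ j))\<^sup>2) \<le> (\<Sum>j\<in>UNIV. s (d j) * (cmod (y $ j))\<^sup>2)"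
    by (intro sum_mono mult_right_mono assms(2)) simp
  ultimately show "\<delta> * (norm x)\<^sup>2 \<le> Re (cinner x (fun_calc U d (\<lambda>z. of_real (s z)) *v x))"
    unfolding Re_eq by linarith
qed

lemma exists_pos_def_ge_fun_calc:
  assumes "\<And>j. 0 < s (d j)"
  shows "\<exists>\<delta>. pos_def_ge \<delta> (fun_calc U d (\<lambda>z. of_real (s z)))"
proof -
  have "0 < Min (range (\<lambda>j. s (d j)))" "\<And>j. Min (range (\<lambda>j. s (d j))) \<le> s (d j)"
    using assms by simp_all
  then show ?thesis
    using pos_def_ge_fun_calc by blast
qed

lemma spectral_proj_fun_calc:
  "spectral_proj (fun_calc U d (\<lambda>z. z)) \<mu> = fun_calc U d (\<lambda>z. if z = \<mu> then 1 else 0)"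
  unfolding spectral_proj_def
proof (rule the_equality)
  let ?N = "fun_calc U d (\<lambda>z. z)" and ?E = "fun_calc U d (\<lambda>z. if z = \<mu> then 1 else 0)"
  have E_proj: "?E ** ?E = ?E" "adj ?E = ?E"
    by (simp_all add: fun_calc_mult adj_fun_calc if_distrib cong: if_cong)
  have N_minus: "?N - mat \<mu> = fun_calc U d (\<lambda>z. z - \<mu>)"
    by (simp add: fun_calc_diff fun_calc_const)
  have "range (\<lambda>x. ?E *v x) = {x. ?N *v x = \<mu> *s x}"
  proof (intro equalityI subsetI)
    fix x assume "x \<in> range (\<lambda>x. ?E *v x)"
    then obtain y where x: "x = ?E *v y"
      by blast
    have "(?N - mat \<mu>) ** ?E = fun_calc U d (\<lambda>z. (z - \<mu>) * (if z = \<mu> then 1 else 0))"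
      by (simp add: N_minus fun_calc_mult)
    also have "\<dots> = fun_calc U d (\<lambda>_. 0)"
      by (rule fun_calc_cong) simp
    finally have "(?N - mat \<mu>) *v x = 0"
      by (simp add: x fun_calc_const matrix_vector_mul_assoc)
    then show "x \<in> {x. ?N *v x = \<mu> *s x}"
      by (simp add: matrix_vector_mult.diff_left mat_mult_vec)
  next
    fix x assume "x \<in> {x. ?N *v x = \<mu> *s x}"
    then have "(?N - mat \<mu>) *v x = 0"
      by (simp add: matrix_vector_mult.diff_left mat_mult_vec)
    define g where "g z = (if z = \<mu> then 0 else inverse (z - \<mu>))" for z
    have "mat 1 - ?E = fun_calc U d (\<lambda>z. 1 - (if z = \<mu> then 1 else 0))"
      by (simp add: fun_calc_diff fun_calc_const)
    also have "\<dots> = fun_calc U d (\<lambda>z. g z * (z - \<mu>))"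
      by (rule fun_calc_cong) (simp add: g_def)
    finally have factor: "mat 1 - ?E = fun_calc U d g ** (?N - mat \<mu>)"
      by (simp add: N_minus fun_calc_mult)
    have "x - ?E *v x = (mat 1 - ?E) *v x"
      by (simp add: matrix_vector_mult.diff_left)
    also have "\<dots> = fun_calc U d g *v ((?N - mat \<mu>) *v x)"
      by (simp only: factor matrix_vector_mul_assoc)
    finally have "x = ?E *v x"
      using \<open>(?N - mat \<mu>) *v x = 0\<close> by simp
    then show "x \<in> range (\<lambda>x. ?E *v x)"
      by (rule range_eqI)
  qed
  then show "?E ** ?E = ?E \<and> adj ?E = ?E \<and> range (\<lambda>x. ?E *v x) = {x. ?N *v x = \<mu> *s x}"
    using E_proj by blast
  fix E assume "E ** E = E \<and> adj E = E \<and> range (\<lambda>x. E *v x) = {x. ?N *v x = \<mu> *s x}"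
  then show "E = ?E"
    using orthogonal_projection_eqI[OF _ _ E_proj] \<open>range (\<lambda>x. ?E *v x) = _\<close> by presburger
qed

lemma fun_calc_spectral_decomposition:
  "fun_calc U d h = (\<Sum>\<mu>\<in>range d. mat (h \<mu>) ** fun_calc U d (\<lambda>z. if z = \<mu> then 1 else 0))"
proof -
  have "fun_calc U d h = fun_calc U d (\<lambda>z. \<Sum>\<mu>\<in>range d. if z = \<mu> then h \<mu> else 0)"
    by (rule fun_calc_cong) (simp add: sum.delta')
  also have "\<dots> = (\<Sum>\<mu>\<in>range d. fun_calc U d (\<lambda>z. h \<mu> * (if z = \<mu> then 1 else 0)))"
    unfolding fun_calc_sum by (intro sum.cong refl fun_calc_cong) simp
  finally show ?thesis
    by (simp add: fun_calc_mult flip: fun_calc_const[of d])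
qed

lemma AN_commute_fun_calc:
  assumes "X \<in> AN d (fun_calc U d (\<lambda>z. z))"
  shows "X ** fun_calc U d h = fun_calc U d h ** X"
proof -
  have X: "X ** fun_calc U d (\<lambda>z. if z = \<mu> then 1 else 0) = fun_calc U d (\<lambda>z. if z = \<mu> then 1 else 0) ** X"
    if "\<mu> \<in> range d" for \<mu>
    using assms that unfolding AN_def spectral_proj_fun_calc by blast
  have "X ** (mat c ** E) = (mat c ** E) ** X" if "X ** E = E ** X" for c E
  proof -
    have "X ** (mat c ** E) = mat c ** (X ** E)"
      by (metis mat_mult_commute matrix_mul_assoc)
    then show ?thesis
      by (simp add: that matrix_mul_assoc)
  qed
  then show ?thesis
    unfolding fun_calc_spectral_decomposition[of d h] matrix_mult.sum_left matrix_mult.sum_right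
    by (intro sum.cong refl) (simp add: X)
qed

section \<open>The derivative on the commutant\<close>

lemma fun_calc_polar_data:
  assumes d: "\<And>j. d j \<noteq> 0"
  defines "N \<equiv> fun_calc U d (\<lambda>z. z)"
    and "M \<equiv> fun_calc U d (\<lambda>z. of_real (cmod z))"
    and "R \<equiv> fun_calc U d (\<lambda>z. of_real (sqrt (cmod z)))"
    and "Mi \<equiv> fun_calc U d (\<lambda>z. inverse (of_real (cmod z)))"
  shows "M ** M = adj N ** N" "R ** R = M" "M ** Mi = mat 1"
    and "\<exists>\<delta>. pos_def_ge \<delta> M" "\<exists>\<epsilon>. pos_def_ge \<epsilon> R"
proof -
  have "of_real (cmod z) * of_real (cmod z) = cnj z * z" for z
    by (metis complex_norm_square mult.commute of_real_mult power2_eq_square)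
  then show "M ** M = adj N ** N"
    by (simp add: M_def N_def adj_fun_calc fun_calc_mult)
  show "R ** R = M"
    by (simp add: R_def M_def fun_calc_mult flip: of_real_mult)
  show "M ** Mi = mat 1"
    unfolding M_def Mi_def fun_calc_mult using d by (simp add: fun_calc_cong[of _ d "\<lambda>_. 1"] fun_calc_const)
  show "\<exists>\<delta>. pos_def_ge \<delta> M" "\<exists>\<epsilon>. pos_def_ge \<epsilon> R"
    unfolding M_def R_def using d by (simp_all add: exists_pos_def_ge_fun_calc)
qed

lemma commute_fun_calc_adj_mult_add:
  assumes X: "\<And>h. X ** fun_calc U d h = fun_calc U d h ** X"
  defines "N \<equiv> fun_calc U d (\<lambda>z. z)"
  shows "(adj N ** X + adj X ** N) ** fun_calc U d h = fun_calc U d h ** (adj N ** X + adj X ** N)"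
proof -
  have adj_X: "adj X ** fun_calc U d h = fun_calc U d h ** adj X" for h
    using arg_cong[OF X[of "\<lambda>z. cnj (h z)"], of adj] by (simp add: adj_mult adj_fun_calc)
  show ?thesis
    by (simp add: N_def adj_fun_calc matrix_mult.add_left matrix_mult.add_right X adj_X
        fun_calc_mult fun_calc_mult_assoc mult.commute flip: matrix_mul_assoc)
qed

lemma aluthge_derivative_on_commutant:
  assumes d: "\<And>j. d j \<noteq> 0"
    and X: "\<And>h. X ** fun_calc U d h = fun_calc U d h ** X"
    and K: "\<And>h. K ** fun_calc U d h = fun_calc U d h ** K"
  defines "N \<equiv> fun_calc U d (\<lambda>z. z)"
    and "M \<equiv> fun_calc U d (\<lambda>z. of_real (cmod z))"
    and "R \<equiv> fun_calc U d (\<lambda>z. of_real (sqrt (cmod z)))"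
    and "Mi \<equiv> fun_calc U d (\<lambda>z. inverse (of_real (cmod z)))"
  shows "(let L = lyapunov_solve M K; P = lyapunov_solve R L
          in P ** (N ** Mi) ** R + R ** (X ** Mi - N ** (Mi ** L ** Mi)) ** R + R ** (N ** Mi) ** P) = X"
proof -
  let ?F = "fun_calc U d"
  let ?m = "\<lambda>z. complex_of_real (cmod z)" and ?r = "\<lambda>z. complex_of_real (sqrt (cmod z))"
  note polar = fun_calc_polar_data[of d, OF d, folded N_def M_def R_def Mi_def]
  obtain \<delta> \<epsilon> where M: "pos_def_ge \<delta> M" and R: "pos_def_ge \<epsilon> R"
    using polar(4,5) by blast
  have sqrt_sq: "?r z * ?r z = ?m z" for z
    by (simp flip: of_real_mult)
  have K_right: "?F h ** K = K ** ?F h" "?F h ** (K ** Y) = K ** (?F h ** Y)" for h Y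
    using K by (metis matrix_mul_assoc)+
  have X_right: "?F h ** X = X ** ?F h" "?F h ** (X ** Y) = X ** (?F h ** Y)" for h Y
    using X by (metis matrix_mul_assoc)+
  note normalize = matrix_mult.scaleR_left matrix_mult.scaleR_right K_right X_right
    fun_calc_mult fun_calc_mult_assoc
  have L: "lyapunov_solve M K = (1/2) *\<^sub>R (K ** Mi)"
    using lyapunov_solve_commuting[OF M _ polar(3)] K by (simp add: M_def)
  have "R ** ?F (\<lambda>z. inverse (?r z)) = mat 1"
    unfolding R_def fun_calc_mult using d by (simp add: fun_calc_cong[of _ d "\<lambda>_. 1"] fun_calc_const)
  moreover have "R ** ((1/2) *\<^sub>R (K ** Mi)) = ((1/2) *\<^sub>R (K ** Mi)) ** R"
    by (simp add: R_def Mi_def normalize mult.commute flip: matrix_mul_assoc)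
  ultimately have P: "lyapunov_solve R ((1/2) *\<^sub>R (K ** Mi)) = (1/4) *\<^sub>R (K ** ?F (\<lambda>z. inverse (?m z) * inverse (?r z)))"
    using lyapunov_solve_commuting[OF R] by (simp add: Mi_def normalize flip: matrix_mul_assoc)
  txt \<open>All factors are functions of \<open>N\<close> commuting with \<open>K\<close> and \<open>X\<close>, so every term collapses to a
    multiple of \<open>K W\<close> with \<open>W = N |N|\<^sup>-\<^sup>2\<close>; the multiples are \<open>1/4\<close>, \<open>-1/2\<close> and \<open>1/4\<close>.\<close>
  define W where "W = ?F (\<lambda>z. z * inverse (?m z * ?m z))"
  have t1: "(1/4) *\<^sub>R (K ** ?F (\<lambda>z. inverse (?m z) * inverse (?r z))) ** (N ** Mi) ** R = (1/4) *\<^sub>R (K ** W)"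
    and t2: "R ** (N ** (Mi ** ((1/2) *\<^sub>R (K ** Mi)) ** Mi)) ** R = (1/2) *\<^sub>R (K ** W)"
    and t3: "R ** (N ** Mi) ** ((1/4) *\<^sub>R (K ** ?F (\<lambda>z. inverse (?m z) * inverse (?r z)))) = (1/4) *\<^sub>R (K ** W)"
    unfolding N_def Mi_def R_def W_def using d
    by (simp_all add: normalize flip: matrix_mul_assoc)
      (intro arg_cong[where f="\<lambda>A. K ** A"] fun_calc_cong; simp add: field_simps sqrt_sq)+
  have t4: "R ** (X ** Mi) ** R = X"
    unfolding Mi_def R_def using d
    by (simp add: normalize flip: matrix_mul_assoc)
      (subst fun_calc_cong[of _ d "\<lambda>_. 1"]; simp add: fun_calc_const field_simps sqrt_sq)
  have "(1/4) *\<^sub>R (K ** W) + (X - (1/2) *\<^sub>R (K ** W)) + (1/4) *\<^sub>R (K ** W) = X"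
    by (simp add: algebra_simps flip: scaleR_add_left)
  then show ?thesis
    by (simp add: Let_def L P t1 t2 t3 t4 matrix_mult.diff_left matrix_mult.diff_right)
qed

end

theorem proposition3p1:
  fixes d :: "'n::finite \<Rightarrow> complex" and N :: "'n cmat"
  assumes "\<forall>i. d i \<noteq> 0"
    and "N \<in> unitary_orbit (diag d)"
  shows "aluthge differentiable (at N) \<and>
         (\<forall>X\<in>AN d N. frechet_derivative aluthge (at N) X = X)"
proof -
  obtain U where U: "unitary U" and N: "N = fun_calc U d (\<lambda>z. z)"
    using assms(2) unfolding unitary_orbit_def fun_calc_def by auto
  define M where "M = fun_calc U d (\<lambda>z. of_real (cmod z))"
  define R where "R = fun_calc U d (\<lambda>z. of_real (sqrt (cmod z)))"
  define Mi where "Mi = fun_calc U d (\<lambda>z. inverse (of_real (cmod z)))"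
  define D where "D H = (let L = lyapunov_solve M (adj N ** H + adj H ** N); P = lyapunov_solve R L
    in P ** (N ** Mi) ** R + R ** (H ** Mi - N ** (Mi ** L ** Mi)) ** R + R ** (N ** Mi) ** P)" for H
  note polar = fun_calc_polar_data[OF U, of d, folded N M_def R_def Mi_def]
  obtain \<delta> \<epsilon> where "pos_def_ge \<delta> M" "pos_def_ge \<epsilon> R"
    using polar(4,5) assms(1) by blast
  then have deriv: "(aluthge has_derivative D) (at N)"
    unfolding D_def using aluthge_has_derivative polar(1-3) assms(1) by blast
  have "D X = X" if "X \<in> AN d N" for X
  proof -
    have X: "X ** fun_calc U d h = fun_calc U d h ** X" for h
      using AN_commute_fun_calc[OF U] that N by blast
    show ?thesis
      unfolding D_def N M_def R_def Mi_def
      using aluthge_derivative_on_commutant[OF U _ X commute_fun_calc_adj_mult_add[OF U X]] assms(1) by blast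
  qed
  then show ?thesis
    using deriv frechet_derivative_at differentiable_def by metis
qed

end
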